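(* Let $\mathcal{H}$ be a complex Hilbert space, let $N(\cdot)$ be a weakly unitarily invariant self-adjoint algebra norm on $\mathbb{B}(\mathcal{H})$, and let $T\in\mathbb{B}(\mathcal{H})$ with $\|T\|\le 1$. Then $$w_{N}(TT^* - T^*T) \leq 4N(T)\sup_{U\in\mathcal{U}}N(U).$$
   Context: $\mathbb{B}(\mathcal{H})$ is the algebra of bounded linear operators on $\mathcal{H}$, $\|\cdot\|$ the usual operator norm, and $\mathcal{U}$ the group of unitary operators in $\mathbb{B}(\mathcal{H})$. A norm $N(\cdot)$ on $\mathbb{B}(\mathcal{H})$ is an algebra norm if $N(TS)\le N(T)N(S)$ for all $T,S$; self-adjoint if $N(T^* )=N(T)$ for all $T$; weakly unitarily invariant if $N(U^*TU)=N(T)$ for all $T\in\mathbb{B}(\mathcal{H})$, $U\in\mathcal{U}$. For $A\in\mathbb{B}(\mathcal{H})$, ${\rm Re}(A)=\frac{A+A^*}{2}$. The generalized numerical radius is $w_N(T)=\sup_{\theta\in\mathbb{R}} N\big({\rm Re}(e^{i\theta}T)\big)$. *)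

theory Defs
  imports "HOL-Analysis.Analysis"
begin

class complex_hilbert = real_normed_vector + complete_space +
  fixes scaleC :: "complex \<Rightarrow> 'a \<Rightarrow> 'a"
    and cinner :: "'a \<Rightarrow> 'a \<Rightarrow> complex"
  assumes scaleC_add_right: "scaleC a (x + y) = scaleC a x + scaleC a y"
    and scaleC_add_left: "scaleC (a + b) x = scaleC a x + scaleC b x"
    and scaleC_scaleC: "scaleC a (scaleC b x) = scaleC (a * b) x"
    and scaleC_one: "scaleC 1 x = x"
    and scaleR_scaleC: "scaleR r x = scaleC (complex_of_real r) x"
    and cinner_commute: "cinner x y = cnj (cinner y x)"
    and cinner_add_right: "cinner x (y + z) = cinner x y + cinner x z"
    and cinner_scaleC_right: "cinner x (scaleC a y) = a * cinner x y"
    and cinner_nonneg: "0 \<le> Re (cinner x x)"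
    and cinner_eq_zero_iff: "cinner x x = 0 \<longleftrightarrow> x = 0"
    and norm_eq_sqrt_cinner: "norm x = sqrt (Re (cinner x x))"

definition bounded_clinear_op :: "('h::complex_hilbert \<Rightarrow> 'h) \<Rightarrow> bool" where
  "bounded_clinear_op T \<longleftrightarrow>
     (\<forall>x y. T (x + y) = T x + T y) \<and>
     (\<forall>a x. T (scaleC a x) = scaleC a (T x)) \<and>
     (\<exists>K. \<forall>x. norm (T x) \<le> norm x * K)"

definition BH :: "('h::complex_hilbert \<Rightarrow> 'h) set" where
  "BH = {T. bounded_clinear_op T}"

definition adj :: "('h::complex_hilbert \<Rightarrow> 'h) \<Rightarrow> ('h \<Rightarrow> 'h)" where
  "adj T = (THE S. \<forall>x y. cinner (T x) y = cinner x (S y))"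

definition unitaries :: "('h::complex_hilbert \<Rightarrow> 'h) set" where
  "unitaries = {U \<in> BH. adj U \<circ> U = id \<and> U \<circ> adj U = id}"

definition op_add :: "('h::complex_hilbert \<Rightarrow> 'h) \<Rightarrow> ('h \<Rightarrow> 'h) \<Rightarrow> ('h \<Rightarrow> 'h)" where
  "op_add T S = (\<lambda>x. T x + S x)"

definition op_scale :: "complex \<Rightarrow> ('h::complex_hilbert \<Rightarrow> 'h) \<Rightarrow> ('h \<Rightarrow> 'h)" where
  "op_scale a T = (\<lambda>x. scaleC a (T x))"

definition ReOp :: "('h::complex_hilbert \<Rightarrow> 'h) \<Rightarrow> ('h \<Rightarrow> 'h)" where
  "ReOp A = op_scale (1/2) (op_add A (adj A))"

definition is_norm_on_BH :: "(('h::complex_hilbert \<Rightarrow> 'h) \<Rightarrow> real) \<Rightarrow> bool" where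
  "is_norm_on_BH N \<longleftrightarrow>
     (\<forall>T\<in>BH. 0 \<le> N T) \<and>
     (\<forall>T\<in>BH. N T = 0 \<longleftrightarrow> T = (\<lambda>x. 0)) \<and>
     (\<forall>T\<in>BH. \<forall>S\<in>BH. N (op_add T S) \<le> N T + N S) \<and>
     (\<forall>a. \<forall>T\<in>BH. N (op_scale a T) = cmod a * N T)"

definition algebra_norm :: "(('h::complex_hilbert \<Rightarrow> 'h) \<Rightarrow> real) \<Rightarrow> bool" where
  "algebra_norm N \<longleftrightarrow> is_norm_on_BH N \<and> (\<forall>T\<in>BH. \<forall>S\<in>BH. N (T \<circ> S) \<le> N T * N S)"

definition self_adjoint_norm :: "(('h::complex_hilbert \<Rightarrow> 'h) \<Rightarrow> real) \<Rightarrow> bool" where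
  "self_adjoint_norm N \<longleftrightarrow> (\<forall>T\<in>BH. N (adj T) = N T)"

definition weakly_unitarily_invariant :: "(('h::complex_hilbert \<Rightarrow> 'h) \<Rightarrow> real) \<Rightarrow> bool" where
  "weakly_unitarily_invariant N \<longleftrightarrow> (\<forall>T\<in>BH. \<forall>U\<in>unitaries. N (adj U \<circ> T \<circ> U) = N T)"

definition gen_num_radius :: "(('h::complex_hilbert \<Rightarrow> 'h) \<Rightarrow> real) \<Rightarrow> ('h \<Rightarrow> 'h) \<Rightarrow> ereal" where
  "gen_num_radius N T = (SUP \<theta>\<in>(UNIV::real set). ereal (N (ReOp (op_scale (exp (\<i> * complex_of_real \<theta>)) T))))"

end

theory Submission
  imports Defs
begin

text \<open>Since \<open>C = T T\<^sup>* - T\<^sup>* T\<close> is self-adjoint, \<open>Re (exp (i \<theta>) C) = cos \<theta> C\<close>, so the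
  generalized numerical radius of \<open>C\<close> is at most \<open>N C \<le> 2 N(T)\<^sup>2\<close>. It remains to show
  \<open>N T \<le> 2 sup N(U)\<close> for a contraction \<open>T\<close>. Writing \<open>T = R + i J\<close> with self-adjoint contractions
  \<open>R\<close>, \<open>J\<close>, this follows from the fact that every self-adjoint strict contraction \<open>A\<close> is the
  mean of the two unitaries \<open>A \<plusminus> i sqrt (1 - A\<^sup>2)\<close>; the square root is the limit of a contracting
  iteration. Adjoints of bounded operators exist by the Riesz representation theorem, which is
  proved by showing that a bounded functional attains its norm on the unit ball.\<close>

section \<open>Complex Hilbert spaces\<close>

context complex_hilbert
begin

subclass banach ..

end

lemma scaleC_zero_right [simp]: "scaleC a 0 = 0"
  using scaleC_add_right[of a 0 0] by simp

lemma scaleC_zero_left [simp]: "scaleC 0 x = 0"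
  using scaleC_add_left[of 0 0 x] by simp

lemma scaleC_minus_right: "scaleC a (- x) = - scaleC a x"
proof -
  have "scaleC a x + scaleC a (- x) = 0" by (simp flip: scaleC_add_right)
  then show ?thesis by (rule minus_unique[symmetric])
qed

lemma scaleC_minus_left: "scaleC (- a) x = - scaleC a x"
proof -
  have "scaleC a x + scaleC (- a) x = 0" by (simp flip: scaleC_add_left)
  then show ?thesis by (rule minus_unique[symmetric])
qed

lemma scaleC_diff_right: "scaleC a (x - y) = scaleC a x - scaleC a y"
  using scaleC_add_right[of a x "- y"] by (simp add: scaleC_minus_right)

lemma scaleC_scaleR_commute: "scaleC a (scaleR r x) = scaleR r (scaleC a x)"
  by (simp add: scaleR_scaleC scaleC_scaleC mult.commute)

lemma cinner_add_left: "cinner (x + y) z = cinner x z + cinner y z"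
proof -
  have "cinner (x + y) z = cnj (cinner z x) + cnj (cinner z y)"
    by (subst cinner_commute) (simp add: cinner_add_right)
  then show ?thesis by (simp flip: cinner_commute)
qed

lemma cinner_scaleC_left: "cinner (scaleC a x) y = cnj a * cinner x y"
proof -
  have "cinner (scaleC a x) y = cnj a * cnj (cinner y x)"
    by (subst cinner_commute) (simp add: cinner_scaleC_right)
  then show ?thesis by (simp flip: cinner_commute)
qed

lemma cinner_zero_right [simp]: "cinner x 0 = 0"
  using cinner_add_right[of x 0 0] by simp

lemma cinner_zero_left [simp]: "cinner 0 x = 0"
  using cinner_add_left[of 0 0 x] by simp

lemma cinner_minus_right: "cinner x (- y) = - cinner x y"
proof -
  have "cinner x y + cinner x (- y) = 0" by (simp flip: cinner_add_right)
  then show ?thesis by (rule minus_unique[symmetric])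
qed

lemma cinner_minus_left: "cinner (- x) y = - cinner x y"
proof -
  have "cinner x y + cinner (- x) y = 0" by (simp flip: cinner_add_left)
  then show ?thesis by (rule minus_unique[symmetric])
qed

lemma cinner_diff_right: "cinner x (y - z) = cinner x y - cinner x z"
  using cinner_add_right[of x y "- z"] by (simp add: cinner_minus_right)

lemma cinner_diff_left: "cinner (x - y) z = cinner x z - cinner y z"
  using cinner_add_left[of x "- y" z] by (simp add: cinner_minus_left)

lemma cinner_scaleR_left: "cinner (scaleR r x) y = of_real r * cinner x y"
  by (simp add: scaleR_scaleC cinner_scaleC_left)

lemma cinner_scaleR_right: "cinner x (scaleR r y) = of_real r * cinner x y"
  by (simp add: scaleR_scaleC cinner_scaleC_right)

lemma Re_cinner_commute: "Re (cinner y x) = Re (cinner x y)"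
  by (subst cinner_commute) simp

lemma power2_norm_eq_cinner: "(norm x)\<^sup>2 = Re (cinner x x)"
  by (simp add: norm_eq_sqrt_cinner cinner_nonneg)

lemma cinner_self_eq_power2_norm: "cinner x x = of_real ((norm x)\<^sup>2)"
proof -
  have "Im (cinner x x) = 0"
    using arg_cong[OF cinner_commute[of x x], of Im] by simp
  then show ?thesis by (simp add: power2_norm_eq_cinner complex_eq_iff)
qed

lemma power2_norm_add:
  "(norm (x + y))\<^sup>2 = (norm x)\<^sup>2 + 2 * Re (cinner x y) + (norm y)\<^sup>2"
  by (simp add: power2_norm_eq_cinner cinner_add_left cinner_add_right Re_cinner_commute[of y x])

lemma power2_norm_diff:
  "(norm (x - y))\<^sup>2 = (norm x)\<^sup>2 - 2 * Re (cinner x y) + (norm y)\<^sup>2"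
  by (simp add: power2_norm_eq_cinner cinner_diff_left cinner_diff_right Re_cinner_commute[of y x])

lemma norm_scaleC: "norm (scaleC a x) = cmod a * norm x"
proof -
  have "cinner (scaleC a x) (scaleC a x) = (cnj a * a) * cinner x x"
    by (simp add: cinner_scaleC_left cinner_scaleC_right)
  also have "cnj a * a = of_real ((cmod a)\<^sup>2)"
    using complex_norm_square[of a] by (simp add: mult.commute)
  finally have "cinner (scaleC a x) (scaleC a x) = of_real ((cmod a)\<^sup>2 * (norm x)\<^sup>2)"
    by (simp add: cinner_self_eq_power2_norm)
  then have "(norm (scaleC a x))\<^sup>2 = (cmod a * norm x)\<^sup>2"
    by (simp only: power2_norm_eq_cinner Re_complex_of_real power_mult_distrib)
  then show ?thesis by (simp add: power2_eq_iff_nonneg)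
qed

lemma Re_cinner_cauchy_schwarz: "Re (cinner x y) \<le> norm x * norm y"
proof (cases "norm x * norm y = 0")
  case False
  then have pos: "norm x * norm y > 0" by (simp add: less_le)
  have "2 * Re (cinner (scaleR (norm y) x) (scaleR (norm x) y))
      \<le> (norm (scaleR (norm y) x))\<^sup>2 + (norm (scaleR (norm x) y))\<^sup>2"
    using power2_norm_diff[of "scaleR (norm y) x" "scaleR (norm x) y"] by (smt (verit) zero_le_power2)
  then have "2 * (norm x * norm y) * Re (cinner x y) \<le> 2 * (norm x * norm y) * (norm x * norm y)"
    by (simp add: cinner_scaleR_left cinner_scaleR_right power_mult_distrib algebra_simps
        power2_eq_square)
  then have "(norm x * norm y) * Re (cinner x y) \<le> (norm x * norm y) * (norm x * norm y)"
    by (simp add: mult.assoc)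
  then show ?thesis using mult_le_cancel_left_pos[OF pos] by simp
next
  case True
  then have "x = 0 \<or> y = 0" by simp
  then show ?thesis by auto
qed

text \<open>Rotating \<open>y\<close> by the phase of \<open>cinner x y\<close> reduces the complex inequality to the real one.\<close>

lemma cinner_cauchy_schwarz: "cmod (cinner x y) \<le> norm x * norm y"
proof (cases "cinner x y = 0")
  case False
  define a where "a = cinner x y"
  define c where "c = cnj a / of_real (cmod a)"
  have a0: "a \<noteq> 0" using False by (simp add: a_def)
  have c1: "cmod c = 1" using a0 by (simp add: c_def norm_divide)
  have "c * a = (cnj a * a) / of_real (cmod a)" by (simp add: c_def)
  also have "cnj a * a = of_real ((cmod a)\<^sup>2)"
    using complex_norm_square[of a] by (simp add: mult.commute)
  also have "of_real ((cmod a)\<^sup>2) / of_real (cmod a) = (of_real (cmod a) :: complex)"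
    using a0 by (simp add: power2_eq_square)
  finally have "cinner x (scaleC c y) = of_real (cmod a)"
    by (simp add: cinner_scaleC_right a_def)
  then have "cmod a = Re (cinner x (scaleC c y))" by simp
  also have "\<dots> \<le> norm x * norm (scaleC c y)" by (rule Re_cinner_cauchy_schwarz)
  also have "\<dots> = norm x * norm y" by (simp add: norm_scaleC c1)
  finally show ?thesis by (simp add: a_def)
qed simp

lemma bounded_linear_scaleC: "bounded_linear (scaleC a)"
  by (rule bounded_linear_intro[where K = "cmod a"])
    (simp_all add: scaleC_add_right scaleC_scaleR_commute norm_scaleC mult.commute)

lemma bounded_linear_cinner_left: "bounded_linear (\<lambda>x. cinner x y)"
  by (rule bounded_linear_intro[where K = "norm y"])
    (simp_all add: cinner_add_left cinner_scaleR_left scaleR_conv_of_real cinner_cauchy_schwarz)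

lemma bounded_linear_cinner_right: "bounded_linear (\<lambda>x. cinner y x)"
  by (rule bounded_linear_intro[where K = "norm y"])
    (simp_all add: cinner_add_right cinner_scaleR_right scaleR_conv_of_real,
      metis cinner_cauchy_schwarz mult.commute)

lemma cinner_right_eqI:
  assumes "\<And>x. cinner x u = cinner x v"
  shows "u = v"
proof -
  have "cinner (u - v) (u - v) = 0" using assms[of "u - v"] by (simp add: cinner_diff_right)
  then show ?thesis by (simp add: cinner_eq_zero_iff)
qed

section \<open>Riesz representation\<close>

lemma linear_le_quadratic_imp_eq_0:
  fixes d k :: real
  assumes "\<And>t. t * d \<le> k * t\<^sup>2" and "0 \<le> k"
  shows "d = 0"
proof -
  define s where "s = k + 1"
  have "0 < s" using assms(2) by (simp add: s_def)
  have "d / s * d \<le> k * (d / s)\<^sup>2" by (rule assms(1))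
  then have "d\<^sup>2 * s \<le> k * d\<^sup>2"
    using \<open>0 < s\<close> by (simp add: power2_eq_square divide_le_eq field_simps)
  then have "d\<^sup>2 \<le> 0" by (simp add: s_def algebra_simps)
  then show ?thesis by simp
qed

text \<open>Parallelogram law: if \<open>u\<close> and \<open>v\<close> nearly maximize \<open>g\<close> on the unit ball, then so does
  their midpoint, which therefore has norm close to \<open>1\<close>; hence \<open>u\<close> and \<open>v\<close> are close.\<close>

lemma near_maximizers_close:
  fixes g :: "'h::complex_hilbert \<Rightarrow> real"
  assumes g: "bounded_linear g" and "0 < M" and le_M: "\<And>y. g y \<le> M * norm y"
    and "norm u \<le> 1" "norm v \<le> 1" "M - a < g u" "M - b < g v"
  shows "(norm (u - v))\<^sup>2 \<le> 4 * (a + b) / M"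
proof -
  have "2 * M - (a + b) < g (u + v)"
    using assms(6,7) by (simp add: linear_simps[OF g])
  also have "\<dots> \<le> M * norm (u + v)" by (rule le_M)
  finally have "2 - (a + b) / M < norm (u + v)" using \<open>0 < M\<close> by (simp add: field_simps)
  then have "4 - 4 * ((a + b) / M) \<le> (norm (u + v))\<^sup>2"
  proof (cases "2 - (a + b) / M \<le> 0")
    case True then show ?thesis by (smt (verit) zero_le_power2)
  next
    case False
    then have "(2 - (a + b) / M)\<^sup>2 \<le> (norm (u + v))\<^sup>2"
      using \<open>2 - (a + b) / M < norm (u + v)\<close> by (intro power_mono) auto
    moreover have "4 - 4 * ((a + b) / M) \<le> (2 - (a + b) / M)\<^sup>2"
      using zero_le_power2[of "(a + b) / M"] unfolding power2_diff by simp
    ultimately show ?thesis by linarith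
  qed
  moreover have "(norm u)\<^sup>2 \<le> 1" "(norm v)\<^sup>2 \<le> 1"
    using assms(4,5) by (simp_all add: power_le_one)
  ultimately show ?thesis
    using power2_norm_add[of u v] power2_norm_diff[of u v] by simp
qed

lemma near_maximizers_Cauchy:
  fixes g :: "'h::complex_hilbert \<Rightarrow> real"
  assumes g: "bounded_linear g" and "0 < M" and le_M: "\<And>y. g y \<le> M * norm y"
    and ball: "\<And>n. norm (xs n) \<le> 1" and near: "\<And>n. M - inverse (Suc n) < g (xs n)"
  shows "Cauchy xs"
proof (rule metric_CauchyI)
  fix eps :: real
  assume "0 < eps"
  then have "0 < M * eps\<^sup>2 / 8" using \<open>0 < M\<close> by simp
  then obtain K :: nat where "K \<noteq> 0" and K: "inverse (real K) < M * eps\<^sup>2 / 8"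
    using real_arch_inverse by blast
  have "dist (xs m) (xs n) < eps" if "K \<le> m" "K \<le> n" for m n
  proof -
    have "inverse (real (Suc m)) \<le> inverse (real K)" "inverse (real (Suc n)) \<le> inverse (real K)"
      using that \<open>K \<noteq> 0\<close> by (simp_all add: le_imp_inverse_le)
    have "(dist (xs m) (xs n))\<^sup>2 \<le> 4 * (inverse (Suc m) + inverse (Suc n)) / M"
      using near_maximizers_close[OF g \<open>0 < M\<close> le_M ball ball near near, of m n]
      by (simp add: dist_norm)
    also have "\<dots> \<le> 4 * (2 * inverse (real K)) / M"
      using \<open>inverse (Suc m) \<le> _\<close> \<open>inverse (Suc n) \<le> _\<close> \<open>0 < M\<close> by (intro divide_right_mono) auto
    also have "\<dots> < eps\<^sup>2"
    proof -
      have "8 * inverse (real K) < M * eps\<^sup>2" using K by simp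
      then show ?thesis using \<open>0 < M\<close> by (simp add: pos_divide_less_eq mult.commute)
    qed
    finally show ?thesis using \<open>0 < eps\<close> by (simp add: power_less_imp_less_base)
  qed
  then show "\<exists>K. \<forall>m\<ge>K. \<forall>n\<ge>K. dist (xs m) (xs n) < eps" by blast
qed

lemma near_maximizers_limit:
  fixes g :: "'h::complex_hilbert \<Rightarrow> real"
  assumes g: "bounded_linear g" and "0 < M" and le_M: "\<And>y. g y \<le> M * norm y"
    and ball: "\<And>n. norm (xs n) \<le> 1" and near: "\<And>n. M - inverse (Suc n) < g (xs n)"
  obtains z where "norm z \<le> 1" "g z = M"
proof -
  have "Cauchy xs" by (rule near_maximizers_Cauchy[OF assms])
  then obtain z where lim: "xs \<longlonglongrightarrow> z" using Cauchy_convergent_iff convergent_def by blast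
  have "norm z \<le> 1"
    using LIMSEQ_le_const2[OF tendsto_norm[OF lim]] ball by blast
  have "M \<le> g z"
  proof (rule tendsto_le[OF trivial_limit_sequentially])
    show "(\<lambda>n. g (xs n)) \<longlonglongrightarrow> g z" by (rule bounded_linear.tendsto[OF g lim])
    show "(\<lambda>n. M - inverse (Suc n)) \<longlonglongrightarrow> M"
      using tendsto_diff[OF tendsto_const LIMSEQ_inverse_real_of_nat] by simp
    show "\<forall>\<^sub>F n in sequentially. M - inverse (Suc n) \<le> g (xs n)"
      using near by (simp add: less_imp_le)
  qed
  moreover have "g z \<le> M"
    using le_M[of z] \<open>norm z \<le> 1\<close> \<open>0 < M\<close> by (smt (verit) mult_left_le)
  ultimately show thesis using \<open>norm z \<le> 1\<close> by (intro that) simp_all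
qed

lemma bounded_linear_le_SUP_unit_ball:
  fixes g :: "'a::real_normed_vector \<Rightarrow> real"
  assumes g: "bounded_linear g"
  shows "bdd_above (g ` {x. norm x \<le> 1})" and "g y \<le> (SUP x\<in>{x. norm x \<le> 1}. g x) * norm y"
proof -
  obtain K where K: "\<And>x. norm (g x) \<le> norm x * K" "0 < K"
    using bounded_linear.pos_bounded[OF g] by blast
  show bdd: "bdd_above (g ` {x. norm x \<le> 1})"
  proof (rule bdd_aboveI2)
    fix x :: 'a assume "x \<in> {x. norm x \<le> 1}"
    then have "norm x * K \<le> K" using K(2) by (simp add: mult_left_le_one_le)
    then show "g x \<le> K" using K(1)[of x] by simp
  qed
  show "g y \<le> (SUP x\<in>{x. norm x \<le> 1}. g x) * norm y"
  proof (cases "y = 0")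
    case False
    then have "g (scaleR (1 / norm y) y) \<le> (SUP x\<in>{x. norm x \<le> 1}. g x)"
      using bdd by (intro cSUP_upper) simp_all
    with False show ?thesis by (simp add: linear_simps[OF g] field_simps)
  qed (simp add: linear_simps[OF g])
qed

lemma real_functional_attains_norm:
  fixes g :: "'h::complex_hilbert \<Rightarrow> real"
  assumes g: "bounded_linear g"
  obtains z M where "norm z \<le> 1" "g z = M" "0 \<le> M" "\<And>y. g y \<le> M * norm y"
proof -
  define B where "B = {x::'h. norm x \<le> 1}"
  define M where "M = (SUP x\<in>B. g x)"
  have bdd: "bdd_above (g ` B)" and le_M: "\<And>y. g y \<le> M * norm y"
    unfolding B_def M_def using bounded_linear_le_SUP_unit_ball[OF g] by blast+
  have "0 \<in> B" by (simp add: B_def)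
  then have "0 \<le> M"
    unfolding M_def using cSUP_upper[OF _ bdd] by (metis linear_simps(3)[OF g])
  show thesis
  proof (cases "M = 0")
    case True
    then show thesis using le_M by (intro that[of 0 0]) (simp_all add: linear_simps[OF g])
  next
    case False
    with \<open>0 \<le> M\<close> have "0 < M" by simp
    have "\<exists>x. norm x \<le> 1 \<and> M - inverse (Suc n) < g x" for n
    proof -
      have "M - inverse (Suc n) < (SUP x\<in>B. g x)" by (simp flip: M_def)
      moreover have "B \<noteq> {}" using \<open>0 \<in> B\<close> by blast
      ultimately show ?thesis by (subst (asm) less_cSUP_iff) (use bdd in \<open>auto simp: B_def\<close>)
    qed
    then obtain xs where ball: "\<And>n. norm (xs n) \<le> 1" and near: "\<And>n. M - inverse (Suc n) < g (xs n)"
      by metis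
    obtain z where "norm z \<le> 1" "g z = M"
      using near_maximizers_limit[OF g \<open>0 < M\<close> le_M ball near] by blast
    show thesis using \<open>norm z \<le> 1\<close> \<open>g z = M\<close> \<open>0 \<le> M\<close> le_M by (rule that)
  qed
qed

text \<open>First variation at the maximizer: \<open>g (z + t x) \<le> M \<parallel>z + t x\<parallel>\<close> for all real \<open>t\<close>
  forces the linear terms in \<open>t\<close> to agree.\<close>

lemma norm_attaining_vector_represents:
  fixes g :: "'h::complex_hilbert \<Rightarrow> real"
  assumes g: "bounded_linear g" and "norm z \<le> 1" "g z = M" "0 \<le> M"
    and le_M: "\<And>y. g y \<le> M * norm y"
  shows "g x = M * Re (cinner z x)"
proof -
  define c where "c = Re (cinner z x)"
  have "t * (g x - M * c) \<le> (M * (norm x)\<^sup>2 / 2) * t\<^sup>2" for t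
  proof -
    let ?w = "z + scaleR t x"
    have "0 \<le> (norm ?w - 1)\<^sup>2" by simp
    then have half: "norm ?w \<le> (1 + (norm ?w)\<^sup>2) / 2" by (simp add: power2_eq_square algebra_simps)
    have "(norm ?w)\<^sup>2 = (norm z)\<^sup>2 + 2 * t * c + t\<^sup>2 * (norm x)\<^sup>2"
      by (simp add: power2_norm_add cinner_scaleR_right c_def power_mult_distrib)
    also have "\<dots> \<le> 1 + 2 * t * c + t\<^sup>2 * (norm x)\<^sup>2"
      using \<open>norm z \<le> 1\<close> by (simp add: power_le_one)
    finally have w: "(norm ?w)\<^sup>2 \<le> 1 + 2 * t * c + t\<^sup>2 * (norm x)\<^sup>2" .
    have "M + t * g x = g ?w" using \<open>g z = M\<close> by (simp add: linear_simps[OF g])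
    also have "\<dots> \<le> M * norm ?w" by (rule le_M)
    also have "\<dots> \<le> M * ((1 + (norm ?w)\<^sup>2) / 2)" using half \<open>0 \<le> M\<close> by (rule mult_left_mono)
    also have "\<dots> \<le> M * ((2 + 2 * t * c + t\<^sup>2 * (norm x)\<^sup>2) / 2)"
      using w \<open>0 \<le> M\<close> by (intro mult_left_mono) simp_all
    also have "\<dots> = M + t * (M * c) + (M * (norm x)\<^sup>2 / 2) * t\<^sup>2"
      by (simp add: ring_distribs add_divide_distrib)
    finally show ?thesis by (simp add: right_diff_distrib)
  qed
  then have "g x - M * c = 0"
    by (rule linear_le_quadratic_imp_eq_0) (use \<open>0 \<le> M\<close> in simp)
  then show ?thesis by (simp add: c_def)
qed

lemma riesz_representation:
  fixes f :: "'h::complex_hilbert \<Rightarrow> complex"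
  assumes add: "\<And>x y. f (x + y) = f x + f y" and scale: "\<And>a x. f (scaleC a x) = a * f x"
    and bound: "\<And>x. cmod (f x) \<le> K * norm x"
  shows "\<exists>z. \<forall>x. f x = cinner z x"
proof -
  have "f (scaleR r x) = of_real r * f x" for r x by (simp add: scaleR_scaleC scale)
  moreover have "\<bar>Re (f x)\<bar> \<le> norm x * K" for x
    using abs_Re_le_cmod[of "f x"] bound[of x] by (simp add: mult.commute)
  ultimately have blin: "bounded_linear (\<lambda>x. Re (f x))"
    by (intro bounded_linear_intro[where K = K]) (simp_all add: add)
  obtain z M where "norm z \<le> 1" "Re (f z) = M" "0 \<le> M" "\<And>y. Re (f y) \<le> M * norm y"
    using real_functional_attains_norm[OF blin] by blast
  note re = norm_attaining_vector_represents[OF blin this]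
  have "f x = cinner (scaleC (of_real M) z) x" for x
  proof -
    have "Im (f x) = Re (f (scaleC (- \<i>) x))" by (simp add: scale)
    also have "\<dots> = M * Im (cinner z x)" by (simp add: re cinner_scaleC_right)
    finally show ?thesis using re[of x] by (simp add: cinner_scaleC_left complex_eq_iff)
  qed
  then show ?thesis by blast
qed

section \<open>Bounded operators and adjoints\<close>

definition clinear_op :: "('h::complex_hilbert \<Rightarrow> 'h) \<Rightarrow> bool" where
  "clinear_op T \<longleftrightarrow> (\<forall>x y. T (x + y) = T x + T y) \<and> (\<forall>a x. T (scaleC a x) = scaleC a (T x))"

definition op_norm_le :: "('h::complex_hilbert \<Rightarrow> 'h) \<Rightarrow> real \<Rightarrow> bool" where
  "op_norm_le T K \<longleftrightarrow> (\<forall>x. norm (T x) \<le> K * norm x)"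

definition is_adjoint :: "('h::complex_hilbert \<Rightarrow> 'h) \<Rightarrow> ('h \<Rightarrow> 'h) \<Rightarrow> bool" where
  "is_adjoint T S \<longleftrightarrow> (\<forall>x y. cinner (T x) y = cinner x (S y))"

lemma BH_iff: "T \<in> BH \<longleftrightarrow> clinear_op T \<and> (\<exists>K. op_norm_le T K)"
  unfolding BH_def bounded_clinear_op_def clinear_op_def op_norm_le_def by (auto simp: mult.commute)

lemma clinear_op_add: "clinear_op T \<Longrightarrow> T (x + y) = T x + T y"
  by (simp add: clinear_op_def)

lemma clinear_op_scaleC: "clinear_op T \<Longrightarrow> T (scaleC a x) = scaleC a (T x)"
  by (simp add: clinear_op_def)

lemma clinear_op_scaleR: "clinear_op T \<Longrightarrow> T (scaleR r x) = scaleR r (T x)"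
  by (simp add: clinear_op_def scaleR_scaleC)

lemma clinear_op_zero: "clinear_op T \<Longrightarrow> T 0 = 0"
  using clinear_op_add[of T 0 0] by simp

lemma clinear_op_minus: "clinear_op T \<Longrightarrow> T (- x) = - T x"
  using clinear_op_scaleR[of T "- 1" x] by simp

lemma clinear_op_diff: "clinear_op T \<Longrightarrow> T (x - y) = T x - T y"
  using clinear_op_add[of T x "- y"] clinear_op_minus[of T y] by simp

lemma op_norm_leD: "op_norm_le T K \<Longrightarrow> norm (T x) \<le> K * norm x"
  by (simp add: op_norm_le_def)

lemma op_norm_le_mono: "op_norm_le T K \<Longrightarrow> K \<le> L \<Longrightarrow> op_norm_le T L"
  unfolding op_norm_le_def by (meson mult_right_mono norm_ge_zero order_trans)

lemma op_norm_le_op_add: "op_norm_le T K \<Longrightarrow> op_norm_le S L \<Longrightarrow> op_norm_le (op_add T S) (K + L)"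
  unfolding op_norm_le_def op_add_def by (metis add_mono distrib_right norm_triangle_le)

lemma op_norm_le_op_scale: "op_norm_le T K \<Longrightarrow> op_norm_le (op_scale a T) (cmod a * K)"
  unfolding op_norm_le_def op_scale_def by (simp add: norm_scaleC mult.assoc mult_left_mono)

lemma op_norm_le_comp:
  assumes "op_norm_le T K" "op_norm_le S L" "0 \<le> K"
  shows "op_norm_le (T \<circ> S) (K * L)"
  unfolding op_norm_le_def
proof
  fix x
  have "norm (T (S x)) \<le> K * norm (S x)" by (rule op_norm_leD[OF assms(1)])
  also have "\<dots> \<le> K * (L * norm x)" using op_norm_leD[OF assms(2)] assms(3) by (rule mult_left_mono)
  finally show "norm ((T \<circ> S) x) \<le> K * L * norm x" by (simp add: mult.assoc)
qed

lemma clinear_op_op_add: "clinear_op T \<Longrightarrow> clinear_op S \<Longrightarrow> clinear_op (op_add T S)"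
  by (simp add: clinear_op_def op_add_def scaleC_add_right algebra_simps)

lemma clinear_op_op_scale: "clinear_op T \<Longrightarrow> clinear_op (op_scale a T)"
  by (simp add: clinear_op_def op_scale_def scaleC_add_right scaleC_scaleC mult.commute)

lemma clinear_op_comp: "clinear_op T \<Longrightarrow> clinear_op S \<Longrightarrow> clinear_op (T \<circ> S)"
  by (simp add: clinear_op_def)

lemma BH_op_add: "T \<in> BH \<Longrightarrow> S \<in> BH \<Longrightarrow> op_add T S \<in> BH"
  unfolding BH_iff using clinear_op_op_add op_norm_le_op_add by blast

lemma BH_op_scale: "T \<in> BH \<Longrightarrow> op_scale a T \<in> BH"
  unfolding BH_iff using clinear_op_op_scale op_norm_le_op_scale by blast

lemma BH_comp: "T \<in> BH \<Longrightarrow> S \<in> BH \<Longrightarrow> T \<circ> S \<in> BH"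
  unfolding BH_iff using clinear_op_comp op_norm_le_comp op_norm_le_mono
  by (metis max.cobounded1 max.cobounded2)

lemma clinear_op_bounded_linear: "clinear_op T \<Longrightarrow> op_norm_le T K \<Longrightarrow> bounded_linear T"
  by (rule bounded_linear_intro[where K = K])
    (simp_all add: clinear_op_add clinear_op_scaleR op_norm_leD mult.commute)

lemma op_norm_le_onorm: "T \<in> BH \<Longrightarrow> op_norm_le T (onorm T)"
  unfolding BH_iff by (metis onorm clinear_op_bounded_linear op_norm_le_def)

lemma adj_eqI:
  assumes "is_adjoint T S"
  shows "adj T = S"
  unfolding adj_def
proof (rule the_equality)
  show "\<forall>x y. cinner (T x) y = cinner x (S y)" using assms by (simp add: is_adjoint_def)
  fix S' assume "\<forall>x y. cinner (T x) y = cinner x (S' y)"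
  with assms show "S' = S" by (auto intro: cinner_right_eqI simp: is_adjoint_def)
qed

lemma is_adjoint_sym: "is_adjoint T S \<Longrightarrow> is_adjoint S T"
  unfolding is_adjoint_def by (metis cinner_commute)

lemma is_adjoint_clinear_op:
  assumes "is_adjoint T S"
  shows "clinear_op S"
proof -
  have S: "cinner x (S y) = cinner (T x) y" for x y using assms by (simp add: is_adjoint_def)
  show ?thesis
    unfolding clinear_op_def
    by (intro conjI allI cinner_right_eqI) (simp_all add: S cinner_add_right cinner_scaleC_right)
qed

lemma is_adjoint_op_norm_le:
  assumes "is_adjoint T S" "op_norm_le T K" "0 \<le> K"
  shows "op_norm_le S K"
  unfolding op_norm_le_def
proof
  fix y
  show "norm (S y) \<le> K * norm y"
  proof (cases "S y = 0")
    case False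
    have "(norm (S y))\<^sup>2 = Re (cinner (T (S y)) y)"
      using assms(1) by (simp add: power2_norm_eq_cinner is_adjoint_def)
    also have "\<dots> \<le> norm (T (S y)) * norm y"
      using Re_cinner_cauchy_schwarz by blast
    also have "\<dots> \<le> K * norm (S y) * norm y"
      using op_norm_leD[OF assms(2)] by (simp add: mult_right_mono)
    finally have "norm (S y) * norm (S y) \<le> norm (S y) * (K * norm y)"
      by (simp add: power2_eq_square algebra_simps)
    then show ?thesis using False by simp
  qed (simp add: assms(3))
qed

lemma is_adjoint_adj:
  assumes "T \<in> BH"
  shows "is_adjoint T (adj T)"
proof -
  obtain K where T: "clinear_op T" "op_norm_le T K" and "0 \<le> K"
    using assms op_norm_le_mono unfolding BH_iff by (metis max.cobounded1 max.cobounded2)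
  have "\<exists>z. \<forall>x. cinner y (T x) = cinner z x" for y
  proof (rule riesz_representation)
    show "cinner y (T (u + v)) = cinner y (T u) + cinner y (T v)" for u v
      by (simp add: clinear_op_add[OF T(1)] cinner_add_right)
    show "cinner y (T (scaleC a x)) = a * cinner y (T x)" for a x
      by (simp add: clinear_op_scaleC[OF T(1)] cinner_scaleC_right)
    show "cmod (cinner y (T x)) \<le> norm y * K * norm x" for x
    proof -
      have "cmod (cinner y (T x)) \<le> norm y * norm (T x)" by (rule cinner_cauchy_schwarz)
      also have "\<dots> \<le> norm y * (K * norm x)" by (simp add: op_norm_leD[OF T(2)] mult_left_mono)
      finally show ?thesis by (simp add: mult.assoc)
    qed
  qed
  then obtain S where "\<And>y x. cinner y (T x) = cinner (S y) x" by metis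
  then have "is_adjoint T S"
    unfolding is_adjoint_def by (metis cinner_commute)
  then show ?thesis using adj_eqI by metis
qed

lemma adj_in_BH: "T \<in> BH \<Longrightarrow> adj T \<in> BH"
  using is_adjoint_adj is_adjoint_clinear_op is_adjoint_op_norm_le op_norm_le_mono
  unfolding BH_iff by (metis max.cobounded1 max.cobounded2)

lemma is_adjoint_op_scale: "is_adjoint T S \<Longrightarrow> is_adjoint (op_scale a T) (op_scale (cnj a) S)"
  unfolding is_adjoint_def op_scale_def by (simp add: cinner_scaleC_left cinner_scaleC_right)

lemma cartesian_decomposition:
  fixes T :: "'h::complex_hilbert \<Rightarrow> 'h"
  assumes "T \<in> BH" "op_norm_le T K" "0 \<le> K"
  obtains R J where "R \<in> BH" "J \<in> BH" "op_norm_le R K" "op_norm_le J K"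
    "is_adjoint R R" "is_adjoint J J" "T = op_add R (op_scale \<i> J)"
proof -
  define T' where "T' = adj T"
  have "T' \<in> BH" unfolding T'_def using \<open>T \<in> BH\<close> by (rule adj_in_BH)
  have T': "is_adjoint T T'" unfolding T'_def using \<open>T \<in> BH\<close> by (rule is_adjoint_adj)
  have "op_norm_le T' K" using is_adjoint_op_norm_le[OF T' assms(2,3)] .
  define R where "R = op_scale (1/2) (op_add T T')"
  define J where "J = op_scale (- \<i> / 2) (op_add T (op_scale (- 1) T'))"
  have "R \<in> BH" "J \<in> BH"
    unfolding R_def J_def using \<open>T \<in> BH\<close> \<open>T' \<in> BH\<close> by (simp_all add: BH_op_add BH_op_scale)
  have "op_norm_le R K"
    using op_norm_le_op_scale[OF op_norm_le_op_add[OF \<open>op_norm_le T K\<close> \<open>op_norm_le T' K\<close>], of "1/2"]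
    unfolding R_def by simp
  have "op_norm_le J K"
    using op_norm_le_op_scale[OF op_norm_le_op_add[OF \<open>op_norm_le T K\<close>
        op_norm_le_op_scale[OF \<open>op_norm_le T' K\<close>, of "- 1"]], of "- \<i> / 2"]
    unfolding J_def by (simp add: norm_divide)
  have "is_adjoint R R" "is_adjoint J J"
    using T' is_adjoint_sym[OF T'] unfolding is_adjoint_def R_def J_def op_scale_def op_add_def
    by (simp_all add: cinner_scaleC_left cinner_scaleC_right cinner_add_left cinner_add_right
        algebra_simps)
  have "T = op_add R (op_scale \<i> J)"
  proof
    fix x
    have "op_add R (op_scale \<i> J) x
        = scaleC (1/2) (T x + T' x) + scaleC (\<i> * (- \<i> / 2)) (T x + scaleC (- 1) (T' x))"
      by (simp add: R_def J_def op_scale_def op_add_def scaleC_scaleC)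
    also have "\<dots> = scaleC (1/2) (T x) + scaleC (1/2) (T x)"
      by (simp add: scaleC_add_right scaleC_scaleC scaleC_minus_left scaleC_one scaleC_diff_right)
    also have "\<dots> = T x" by (simp add: scaleC_one flip: scaleC_add_left)
    finally show "T x = op_add R (op_scale \<i> J) x" by simp
  qed
  with \<open>R \<in> BH\<close> \<open>J \<in> BH\<close> \<open>op_norm_le R K\<close> \<open>op_norm_le J K\<close> \<open>is_adjoint R R\<close> \<open>is_adjoint J J\<close>
  show thesis by (rule that)
qed

lemma cartesian_unitaries:
  fixes A B :: "'h::complex_hilbert \<Rightarrow> 'h"
  assumes "A \<in> BH" "B \<in> BH" "is_adjoint A A" "is_adjoint B B"
    and commute: "\<And>x. A (B x) = B (A x)" and sum_squares: "\<And>x. A (A x) + B (B x) = x"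
  shows "(\<lambda>x. A x + scaleC \<i> (B x)) \<in> unitaries \<and> (\<lambda>x. A x - scaleC \<i> (B x)) \<in> unitaries"
proof -
  define W where "W = (\<lambda>x. A x + scaleC \<i> (B x))"
  define V where "V = (\<lambda>x. A x - scaleC \<i> (B x))"
  have A: "clinear_op A" and B: "clinear_op B" using assms(1,2) by (auto simp: BH_iff)
  have "W = op_add A (op_scale \<i> B)" "V = op_add A (op_scale (- \<i>) B)"
    by (simp_all add: W_def V_def fun_eq_iff op_add_def op_scale_def scaleC_minus_left)
  then have "W \<in> BH" "V \<in> BH" using assms(1,2) by (simp_all add: BH_op_add BH_op_scale)
  have "is_adjoint W V"
    using assms(3,4) unfolding is_adjoint_def W_def V_def
    by (simp add: cinner_add_left cinner_scaleC_left cinner_diff_right cinner_scaleC_right)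
  then have "adj W = V" "adj V = W" by (simp_all add: adj_eqI is_adjoint_sym)
  have ii: "scaleC \<i> (scaleC \<i> v) = - v" for v :: 'h
    by (simp add: scaleC_scaleC scaleC_minus_left scaleC_one)
  have "V (W x) = x" for x
  proof -
    have "V (W x) = A (A x) + scaleC \<i> (A (B x)) - scaleC \<i> (B (A x)) - scaleC \<i> (scaleC \<i> (B (B x)))"
      by (simp add: W_def V_def clinear_op_add[OF A] clinear_op_add[OF B] clinear_op_scaleC[OF A]
          clinear_op_scaleC[OF B] scaleC_add_right)
    also have "\<dots> = x" by (simp add: ii commute sum_squares)
    finally show ?thesis .
  qed
  moreover have "W (V x) = x" for x
  proof -
    have "W (V x) = A (A x) - scaleC \<i> (A (B x)) + scaleC \<i> (B (A x)) - scaleC \<i> (scaleC \<i> (B (B x)))"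
      by (simp add: W_def V_def clinear_op_diff[OF A] clinear_op_diff[OF B] clinear_op_scaleC[OF A]
          clinear_op_scaleC[OF B] scaleC_diff_right)
    also have "\<dots> = x" by (simp add: ii commute sum_squares)
    finally show ?thesis .
  qed
  ultimately show ?thesis
    using \<open>W \<in> BH\<close> \<open>V \<in> BH\<close> \<open>adj W = V\<close> \<open>adj V = W\<close>
    unfolding unitaries_def W_def[symmetric] V_def[symmetric] by (auto simp: fun_eq_iff)
qed

section \<open>Square roots of \<open>1 - A\<^sup>2\<close>\<close>

locale strict_selfadjoint_contraction =
  fixes A :: "'h::complex_hilbert \<Rightarrow> 'h" and r :: real
  assumes clinear: "clinear_op A" and norm_le: "op_norm_le A r"
    and r_nonneg: "0 \<le> r" and r_less_1: "r < 1"
    and selfadjoint: "is_adjoint A A"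
begin

text \<open>The iterates converge to \<open>Y = 1 - sqrt (1 - A\<^sup>2)\<close>: the fixed point equation
  \<open>Y = (A\<^sup>2 + Y\<^sup>2) / 2\<close> says \<open>(1 - Y)\<^sup>2 = 1 - A\<^sup>2\<close>. Since \<open>\<parallel>A\<parallel> \<le> r < 1\<close>, the iteration contracts.\<close>

primrec sqrt_iter :: "nat \<Rightarrow> 'h \<Rightarrow> 'h" where
  "sqrt_iter 0 = (\<lambda>x. 0)"
| "sqrt_iter (Suc k) = (\<lambda>x. scaleR (1/2) (A (A x) + sqrt_iter k (sqrt_iter k x)))"

declare sqrt_iter.simps(2) [simp del]

lemma norm_le_sq: "norm (A (A x)) \<le> r * (r * norm x)"
  using op_norm_leD[OF norm_le, of "A x"] op_norm_leD[OF norm_le, of x] r_nonneg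
  by (meson mult_left_mono order_trans)

lemma sqrt_iter_props:
  "clinear_op (sqrt_iter k) \<and> op_norm_le (sqrt_iter k) r \<and> is_adjoint (sqrt_iter k) (sqrt_iter k)
    \<and> (\<forall>x. sqrt_iter k (A x) = A (sqrt_iter k x))"
proof (induction k)
  case 0
  show ?case
    using r_nonneg by (simp add: clinear_op_def op_norm_le_def is_adjoint_def clinear_op_zero[OF clinear])
next
  case (Suc k)
  let ?X = "sqrt_iter k"
  have X: "clinear_op ?X" and "op_norm_le ?X r" and "is_adjoint ?X ?X"
    and commute: "\<And>x. ?X (A x) = A (?X x)" using Suc by auto
  have "clinear_op (sqrt_iter (Suc k))"
    unfolding clinear_op_def
    by (simp add: sqrt_iter.simps clinear_op_add[OF clinear] clinear_op_add[OF X] clinear_op_scaleC[OF clinear]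
        clinear_op_scaleC[OF X] scaleC_add_right scaleC_scaleR_commute algebra_simps)
  moreover have "op_norm_le (sqrt_iter (Suc k)) r"
    unfolding op_norm_le_def
  proof
    fix x
    have "norm (?X (?X x)) \<le> r * (r * norm x)"
      using op_norm_leD[OF \<open>op_norm_le ?X r\<close>, of "?X x"] op_norm_leD[OF \<open>op_norm_le ?X r\<close>, of x]
        r_nonneg by (meson mult_left_mono order_trans)
    then have "norm (sqrt_iter (Suc k) x) \<le> r * (r * norm x)"
      using norm_le_sq[of x] norm_triangle_ineq[of "A (A x)" "?X (?X x)"] by (simp add: sqrt_iter.simps)
    also have "\<dots> \<le> r * norm x"
      using r_nonneg r_less_1 by (simp add: mult_left_le_one_le mult_nonneg_nonneg)
    finally show "norm (sqrt_iter (Suc k) x) \<le> r * norm x" .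
  qed
  moreover have "is_adjoint (sqrt_iter (Suc k)) (sqrt_iter (Suc k))"
    using selfadjoint \<open>is_adjoint ?X ?X\<close> unfolding is_adjoint_def
    by (simp add: sqrt_iter.simps cinner_scaleR_left cinner_scaleR_right cinner_add_left cinner_add_right)
  moreover have "sqrt_iter (Suc k) (A x) = A (sqrt_iter (Suc k) x)" for x
    by (simp add: sqrt_iter.simps commute clinear_op_scaleR[OF clinear] clinear_op_add[OF clinear])
  ultimately show ?case by blast
qed

lemma sqrt_iter_clinear: "clinear_op (sqrt_iter k)"
  and sqrt_iter_norm_le: "op_norm_le (sqrt_iter k) r"
  and sqrt_iter_selfadjoint: "is_adjoint (sqrt_iter k) (sqrt_iter k)"
  and sqrt_iter_commute: "sqrt_iter k (A x) = A (sqrt_iter k x)"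
  using sqrt_iter_props by blast+

lemma sqrt_iter_Suc_commute: "sqrt_iter (Suc k) (sqrt_iter k x) = sqrt_iter k (sqrt_iter (Suc k) x)"
  using sqrt_iter_commute[of k "A x"]
  by (simp add: sqrt_iter.simps sqrt_iter_commute clinear_op_scaleR[OF sqrt_iter_clinear]
      clinear_op_add[OF sqrt_iter_clinear])

lemma norm_sqrt_iter_step: "norm (sqrt_iter (Suc k) x - sqrt_iter k x) \<le> r ^ k * norm x"
proof (induction k arbitrary: x)
  case 0
  have "r * (r * norm x) \<le> norm x"
    using r_nonneg r_less_1 by (simp add: mult_le_one mult_left_le_one_le mult.assoc[symmetric])
  then show ?case using norm_le_sq[of x] by (simp add: sqrt_iter.simps, smt (verit) norm_ge_zero)
next
  case (Suc k)
  let ?X = "sqrt_iter k" and ?X' = "sqrt_iter (Suc k)"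
  let ?d = "?X' x - ?X x"
  have "sqrt_iter (Suc (Suc k)) x - ?X' x = scaleR (1/2) (?X' (?X' x) - ?X (?X x))"
    by (simp only: sqrt_iter.simps(2)[of "Suc k"] sqrt_iter.simps(2)[of k]) (simp add: algebra_simps)
  also have "?X' (?X' x) - ?X (?X x) = ?X' ?d + ?X ?d"
    using sqrt_iter_Suc_commute[of k x]
    by (simp add: clinear_op_diff[OF sqrt_iter_clinear] algebra_simps)
  finally have "norm (sqrt_iter (Suc (Suc k)) x - ?X' x) \<le> (1/2) * (norm (?X' ?d) + norm (?X ?d))"
    by (simp add: norm_triangle_ineq)
  also have "\<dots> \<le> r * norm ?d"
    using op_norm_leD[OF sqrt_iter_norm_le, of "Suc k" ?d] op_norm_leD[OF sqrt_iter_norm_le, of k ?d]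
    by simp
  also have "\<dots> \<le> r * (r ^ k * norm x)" using Suc.IH[of x] r_nonneg by (rule mult_left_mono)
  finally show ?case by simp
qed

definition sqrt_iter_lim :: "'h \<Rightarrow> 'h" where
  "sqrt_iter_lim x = (\<Sum>k. sqrt_iter (Suc k) x - sqrt_iter k x)"

lemma sqrt_iter_LIMSEQ: "(\<lambda>n. sqrt_iter n x) \<longlonglongrightarrow> sqrt_iter_lim x"
proof -
  have "summable (\<lambda>k. r ^ k * norm x)" using r_nonneg r_less_1 by (simp add: summable_mult2)
  then have "summable (\<lambda>k. sqrt_iter (Suc k) x - sqrt_iter k x)"
    using norm_sqrt_iter_step by (blast intro: summable_comparison_test')
  then have "(\<lambda>n. \<Sum>k<n. sqrt_iter (Suc k) x - sqrt_iter k x) \<longlonglongrightarrow> sqrt_iter_lim x"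
    unfolding sqrt_iter_lim_def by (rule summable_LIMSEQ)
  moreover have "(\<Sum>k<n. sqrt_iter (Suc k) x - sqrt_iter k x) = sqrt_iter n x" for n
    using sum_lessThan_telescope[of "\<lambda>k. sqrt_iter k x" n] by simp
  ultimately show ?thesis by simp
qed

lemma sqrt_iter_lim_unique: "(\<lambda>n. sqrt_iter n x) \<longlonglongrightarrow> y \<Longrightarrow> sqrt_iter_lim x = y"
  using sqrt_iter_LIMSEQ LIMSEQ_unique by blast

lemma sqrt_iter_lim_clinear: "clinear_op sqrt_iter_lim"
  unfolding clinear_op_def
proof (intro conjI allI)
  fix x y
  show "sqrt_iter_lim (x + y) = sqrt_iter_lim x + sqrt_iter_lim y"
    using tendsto_add[OF sqrt_iter_LIMSEQ[of x] sqrt_iter_LIMSEQ[of y]]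
    by (intro sqrt_iter_lim_unique) (simp add: clinear_op_add[OF sqrt_iter_clinear])
next
  fix a x
  show "sqrt_iter_lim (scaleC a x) = scaleC a (sqrt_iter_lim x)"
    using bounded_linear.tendsto[OF bounded_linear_scaleC sqrt_iter_LIMSEQ[of x]]
    by (intro sqrt_iter_lim_unique) (simp add: clinear_op_scaleC[OF sqrt_iter_clinear])
qed

lemma sqrt_iter_lim_norm_le: "op_norm_le sqrt_iter_lim r"
  unfolding op_norm_le_def
  by (intro allI LIMSEQ_le_const2[OF tendsto_norm[OF sqrt_iter_LIMSEQ]])
    (simp add: op_norm_leD[OF sqrt_iter_norm_le])

lemma sqrt_iter_lim_selfadjoint: "is_adjoint sqrt_iter_lim sqrt_iter_lim"
  unfolding is_adjoint_def
proof (intro allI)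
  fix x y
  have "(\<lambda>n. cinner (sqrt_iter n x) y) \<longlonglongrightarrow> cinner (sqrt_iter_lim x) y"
    by (rule bounded_linear.tendsto[OF bounded_linear_cinner_left sqrt_iter_LIMSEQ])
  moreover have "(\<lambda>n. cinner x (sqrt_iter n y)) \<longlonglongrightarrow> cinner x (sqrt_iter_lim y)"
    by (rule bounded_linear.tendsto[OF bounded_linear_cinner_right sqrt_iter_LIMSEQ])
  moreover have "cinner (sqrt_iter n x) y = cinner x (sqrt_iter n y)" for n
    using sqrt_iter_selfadjoint by (simp add: is_adjoint_def)
  ultimately show "cinner (sqrt_iter_lim x) y = cinner x (sqrt_iter_lim y)"
    using LIMSEQ_unique by fastforce
qed

lemma sqrt_iter_lim_commute: "sqrt_iter_lim (A x) = A (sqrt_iter_lim x)"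
proof (rule sqrt_iter_lim_unique)
  have "(\<lambda>n. A (sqrt_iter n x)) \<longlonglongrightarrow> A (sqrt_iter_lim x)"
    using clinear_op_bounded_linear[OF clinear norm_le] sqrt_iter_LIMSEQ by (rule bounded_linear.tendsto)
  then show "(\<lambda>n. sqrt_iter n (A x)) \<longlonglongrightarrow> A (sqrt_iter_lim x)" by (simp add: sqrt_iter_commute)
qed

lemma sqrt_iter_lim_fixpoint:
  "sqrt_iter_lim x = scaleR (1/2) (A (A x) + sqrt_iter_lim (sqrt_iter_lim x))"
proof (rule sqrt_iter_lim_unique)
  let ?X = sqrt_iter and ?Y = sqrt_iter_lim
  have "(\<lambda>n. ?X n (?X n x - ?Y x)) \<longlonglongrightarrow> 0"
  proof (rule Lim_null_comparison)
    show "\<forall>\<^sub>F n in sequentially. norm (?X n (?X n x - ?Y x)) \<le> r * norm (?X n x - ?Y x)"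
      by (simp add: op_norm_leD[OF sqrt_iter_norm_le])
    have "(\<lambda>n. ?X n x - ?Y x) \<longlonglongrightarrow> 0" using sqrt_iter_LIMSEQ[of x] by (simp add: LIM_zero)
    then show "(\<lambda>n. r * norm (?X n x - ?Y x)) \<longlonglongrightarrow> 0"
      using tendsto_mult_right_zero tendsto_norm_zero by blast
  qed
  moreover have "(\<lambda>n. ?X n (?Y x)) \<longlonglongrightarrow> ?Y (?Y x)" by (rule sqrt_iter_LIMSEQ)
  ultimately have "(\<lambda>n. ?X n (?X n x - ?Y x) + ?X n (?Y x)) \<longlonglongrightarrow> 0 + ?Y (?Y x)"
    by (rule tendsto_add)
  then have "(\<lambda>n. ?X n (?X n x)) \<longlonglongrightarrow> ?Y (?Y x)"
    by (simp add: clinear_op_diff[OF sqrt_iter_clinear])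
  then have "(\<lambda>n. ?X (Suc n) x) \<longlonglongrightarrow> scaleR (1/2) (A (A x) + ?Y (?Y x))"
    by (simp add: sqrt_iter.simps tendsto_scaleR tendsto_add)
  then show "(\<lambda>n. ?X n x) \<longlonglongrightarrow> scaleR (1/2) (A (A x) + ?Y (?Y x))"
    by (rule LIMSEQ_imp_Suc)
qed

lemma exists_sqrt_one_minus_square:
  "\<exists>B\<in>BH. is_adjoint B B \<and> (\<forall>x. A (B x) = B (A x)) \<and> (\<forall>x. A (A x) + B (B x) = x)"
proof (intro bexI conjI allI)
  let ?Y = sqrt_iter_lim
  define B where "B x = x - ?Y x" for x
  have "B = op_add id (op_scale (- 1) ?Y)"
    by (simp add: B_def fun_eq_iff op_add_def op_scale_def scaleC_minus_left scaleC_one)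
  moreover have "id \<in> BH" by (auto simp: BH_iff clinear_op_def op_norm_le_def intro: exI[of _ 1])
  moreover have "?Y \<in> BH" using sqrt_iter_lim_clinear sqrt_iter_lim_norm_le by (auto simp: BH_iff)
  ultimately show "B \<in> BH" by (auto intro!: BH_op_add BH_op_scale)
  show "is_adjoint B B"
    using sqrt_iter_lim_selfadjoint unfolding is_adjoint_def B_def
    by (simp add: cinner_diff_left cinner_diff_right)
  show "A (B x) = B (A x)" for x
    by (simp add: B_def sqrt_iter_lim_commute clinear_op_diff[OF clinear])
  show "A (A x) + B (B x) = x" for x
  proof -
    have "?Y (?Y x) = scaleR 2 (?Y x) - A (A x)"
      using arg_cong[OF sqrt_iter_lim_fixpoint[of x], of "scaleR 2"] by simp
    then show ?thesis
      by (simp add: B_def clinear_op_diff[OF sqrt_iter_lim_clinear] algebra_simps scaleR_2)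
  qed
qed

lemma unitary_mean:
  "\<exists>W\<in>unitaries. \<exists>V\<in>unitaries. A = op_scale (1/2) (op_add W V)"
proof -
  obtain B where "B \<in> BH" "is_adjoint B B" "\<And>x. A (B x) = B (A x)" "\<And>x. A (A x) + B (B x) = x"
    using exists_sqrt_one_minus_square by blast
  moreover have "A \<in> BH" using clinear norm_le by (auto simp: BH_iff)
  ultimately have "(\<lambda>x. A x + scaleC \<i> (B x)) \<in> unitaries" "(\<lambda>x. A x - scaleC \<i> (B x)) \<in> unitaries"
    using cartesian_unitaries selfadjoint by blast+
  moreover have "A = op_scale (1/2) (op_add (\<lambda>x. A x + scaleC \<i> (B x)) (\<lambda>x. A x - scaleC \<i> (B x)))"
  proof
    fix x
    have "A x + A x = scaleC 2 (A x)" using scaleC_add_left[of 1 1 "A x"] by (simp add: scaleC_one)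
    then show "A x = op_scale (1/2) (op_add (\<lambda>x. A x + scaleC \<i> (B x)) (\<lambda>x. A x - scaleC \<i> (B x))) x"
      by (simp add: op_scale_def op_add_def scaleC_scaleC scaleC_one)
  qed
  ultimately show ?thesis by blast
qed

end

section \<open>Norms on B(H)\<close>

lemma
  assumes "is_norm_on_BH N" and "T \<in> BH"
  shows norm_on_BH_nonneg: "0 \<le> N T"
    and norm_on_BH_op_scale: "N (op_scale a T) = cmod a * N T"
  using assms unfolding is_norm_on_BH_def by blast+

lemma norm_on_BH_triangle:
  "is_norm_on_BH N \<Longrightarrow> T \<in> BH \<Longrightarrow> S \<in> BH \<Longrightarrow> N (op_add T S) \<le> N T + N S"
  unfolding is_norm_on_BH_def by blast

text \<open>For \<open>0 < z < 1\<close>, \<open>z A\<close> is the mean of two unitaries; letting \<open>z \<rightarrow> 1\<close> gives the bound for \<open>A\<close>.\<close>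

lemma norm_selfadjoint_contraction_le:
  fixes N :: "('h::complex_hilbert \<Rightarrow> 'h) \<Rightarrow> real"
  assumes N: "is_norm_on_BH N" and unitary_le: "\<And>U. U \<in> unitaries \<Longrightarrow> N U \<le> s"
    and "A \<in> BH" "op_norm_le A 1" "is_adjoint A A"
  shows "N A \<le> s"
proof (rule field_le_mult_one_interval)
  fix z :: real
  assume z: "0 < z" "z < 1"
  have "strict_selfadjoint_contraction (op_scale (of_real z) A) z"
  proof
    show "clinear_op (op_scale (of_real z) A)"
      using BH_op_scale[OF \<open>A \<in> BH\<close>] by (simp add: BH_iff)
    show "op_norm_le (op_scale (of_real z) A) z"
      using op_norm_le_op_scale[OF \<open>op_norm_le A 1\<close>, of "of_real z"] z by simp
    show "is_adjoint (op_scale (of_real z) A) (op_scale (of_real z) A)"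
      using is_adjoint_op_scale[OF \<open>is_adjoint A A\<close>, of "of_real z"] by simp
  qed (use z in auto)
  then obtain W V where "W \<in> unitaries" "V \<in> unitaries" and zA: "op_scale (of_real z) A = op_scale (1/2) (op_add W V)"
    using strict_selfadjoint_contraction.unitary_mean by blast
  then have "W \<in> BH" "V \<in> BH" by (simp_all add: unitaries_def)
  have "z * N A = N (op_scale (of_real z) A)" using N \<open>A \<in> BH\<close> z by (simp add: norm_on_BH_op_scale)
  also have "\<dots> = (N (op_add W V)) / 2"
    using N BH_op_add[OF \<open>W \<in> BH\<close> \<open>V \<in> BH\<close>] by (simp add: zA norm_on_BH_op_scale)
  also have "\<dots> \<le> (N W + N V) / 2"
    using norm_on_BH_triangle[OF N \<open>W \<in> BH\<close> \<open>V \<in> BH\<close>] by simp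
  also have "\<dots> \<le> s" using unitary_le[OF \<open>W \<in> unitaries\<close>] unitary_le[OF \<open>V \<in> unitaries\<close>] by simp
  finally show "z * N A \<le> s" .
qed

lemma norm_contraction_le:
  fixes N :: "('h::complex_hilbert \<Rightarrow> 'h) \<Rightarrow> real"
  assumes N: "is_norm_on_BH N" and unitary_le: "\<And>U. U \<in> unitaries \<Longrightarrow> N U \<le> s"
    and "T \<in> BH" "op_norm_le T 1"
  shows "N T \<le> 2 * s"
proof -
  obtain R J where "R \<in> BH" "J \<in> BH" "op_norm_le R 1" "op_norm_le J 1"
    "is_adjoint R R" "is_adjoint J J" and T: "T = op_add R (op_scale \<i> J)"
    using cartesian_decomposition[OF \<open>T \<in> BH\<close> \<open>op_norm_le T 1\<close>] by auto
  have "N T \<le> N R + N J"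
    using norm_on_BH_triangle[OF N \<open>R \<in> BH\<close> BH_op_scale[OF \<open>J \<in> BH\<close>], of \<i>]
    by (simp add: T norm_on_BH_op_scale[OF N \<open>J \<in> BH\<close>])
  moreover have "N R \<le> s"
    using N unitary_le \<open>R \<in> BH\<close> \<open>op_norm_le R 1\<close> \<open>is_adjoint R R\<close>
    by (rule norm_selfadjoint_contraction_le)
  moreover have "N J \<le> s"
    using N unitary_le \<open>J \<in> BH\<close> \<open>op_norm_le J 1\<close> \<open>is_adjoint J J\<close>
    by (rule norm_selfadjoint_contraction_le)
  ultimately show ?thesis by linarith
qed

lemma ereal_le_mult_SUP_of_bound:
  fixes f :: "'a \<Rightarrow> real"
  assumes bound: "\<And>s. (\<And>x. x \<in> X \<Longrightarrow> f x \<le> s) \<Longrightarrow> a \<le> c * s" and "0 < c"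
  shows "ereal a \<le> ereal c * (SUP x\<in>X. ereal (f x))"
proof (cases "SUP x\<in>X. ereal (f x)")
  case (real s)
  have "f x \<le> s" if "x \<in> X" for x
    using SUP_upper[OF that, of "\<lambda>x. ereal (f x)"] real by simp
  then show ?thesis using bound real by simp
next
  case PInf
  then show ?thesis using \<open>0 < c\<close> by simp
next
  case MInf
  then have "f x \<le> (a - 1) / c" if "x \<in> X" for x
    using SUP_upper[OF that, of "\<lambda>x. ereal (f x)"] by simp
  then have "a \<le> a - 1" using bound[of "(a - 1) / c"] \<open>0 < c\<close> by simp
  then show ?thesis by simp
qed

lemma norm_contraction_le_SUP_unitaries:
  fixes N :: "('h::complex_hilbert \<Rightarrow> 'h) \<Rightarrow> real"
  assumes "is_norm_on_BH N" "T \<in> BH" "onorm T \<le> 1"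
  shows "ereal (N T) \<le> 2 * (SUP U\<in>unitaries. ereal (N U))"
proof -
  have "op_norm_le T 1" using op_norm_le_onorm[OF assms(2)] assms(3) by (rule op_norm_le_mono)
  then show ?thesis
    using ereal_le_mult_SUP_of_bound[of unitaries N "N T" 2] norm_contraction_le[OF assms(1) _ assms(2)]
    by simp
qed

section \<open>The self-commutator\<close>

lemma
  fixes T :: "'h::complex_hilbert \<Rightarrow> 'h"
  assumes T: "T \<in> BH"
  defines "C \<equiv> \<lambda>x. T (adj T x) - adj T (T x)"
  shows self_commutator_eq: "C = op_add (T \<circ> adj T) (op_scale (- 1) (adj T \<circ> T))"
    and self_commutator_in_BH: "C \<in> BH"
    and self_commutator_selfadjoint: "is_adjoint C C"
proof -
  show C: "C = op_add (T \<circ> adj T) (op_scale (- 1) (adj T \<circ> T))"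
    by (simp add: C_def fun_eq_iff op_add_def op_scale_def scaleC_minus_left scaleC_one)
  show "C \<in> BH"
    unfolding C using T adj_in_BH by (intro BH_op_add BH_op_scale BH_comp)
  have "is_adjoint T (adj T)" "is_adjoint (adj T) T"
    using is_adjoint_adj[OF T] is_adjoint_sym by blast+
  then show "is_adjoint C C"
    unfolding is_adjoint_def C_def by (simp add: cinner_diff_left cinner_diff_right)
qed

lemma norm_self_commutator_le:
  fixes N :: "('h::complex_hilbert \<Rightarrow> 'h) \<Rightarrow> real"
  assumes "algebra_norm N" "self_adjoint_norm N" "T \<in> BH"
  shows "N (\<lambda>x. T (adj T x) - adj T (T x)) \<le> 2 * N T * N T"
proof -
  have N: "is_norm_on_BH N" and mult: "\<And>T S. T \<in> BH \<Longrightarrow> S \<in> BH \<Longrightarrow> N (T \<circ> S) \<le> N T * N S"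
    using assms(1) by (auto simp: algebra_norm_def)
  have "adj T \<in> BH" "N (adj T) = N T"
    using assms(2,3) adj_in_BH by (auto simp: self_adjoint_norm_def)
  have TT': "T \<circ> adj T \<in> BH" "adj T \<circ> T \<in> BH"
    using \<open>adj T \<in> BH\<close> assms(3) by (simp_all add: BH_comp)
  have "N (\<lambda>x. T (adj T x) - adj T (T x)) \<le> N (T \<circ> adj T) + N (op_scale (- 1) (adj T \<circ> T))"
    unfolding self_commutator_eq[OF assms(3)] using TT' by (intro norm_on_BH_triangle[OF N] BH_op_scale)
  also have "N (op_scale (- 1) (adj T \<circ> T)) = N (adj T \<circ> T)"
    using TT' by (simp add: norm_on_BH_op_scale[OF N])
  also have "N (T \<circ> adj T) + N (adj T \<circ> T) \<le> N T * N (adj T) + N (adj T) * N T"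
    using mult[OF assms(3) \<open>adj T \<in> BH\<close>] mult[OF \<open>adj T \<in> BH\<close> assms(3)] by (rule add_mono)
  finally show ?thesis using \<open>N (adj T) = N T\<close> by simp
qed

lemma ReOp_op_scale_selfadjoint:
  assumes "is_adjoint C C"
  shows "ReOp (op_scale a C) = op_scale (of_real (Re a)) C"
proof -
  have "adj (op_scale a C) = op_scale (cnj a) C"
    using is_adjoint_op_scale[OF assms] by (rule adj_eqI)
  moreover have "(1/2) * (a + cnj a) = of_real (Re a)" by (simp add: complex_add_cnj)
  ultimately show ?thesis
    by (simp add: ReOp_def fun_eq_iff op_add_def op_scale_def scaleC_scaleC flip: scaleC_add_left)
qed

lemma gen_num_radius_selfadjoint_le:
  assumes "is_norm_on_BH N" "C \<in> BH" "is_adjoint C C"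
  shows "gen_num_radius N C \<le> ereal (N C)"
  unfolding gen_num_radius_def
proof (rule SUP_least)
  fix \<theta> :: real
  let ?e = "exp (\<i> * of_real \<theta>)"
  have "\<bar>Re ?e\<bar> \<le> 1" using abs_Re_le_cmod[of ?e] by simp
  then have "\<bar>Re ?e\<bar> * N C \<le> N C" using norm_on_BH_nonneg[OF assms(1,2)] by (simp add: mult_left_le_one_le)
  then show "ereal (N (ReOp (op_scale ?e C))) \<le> ereal (N C)"
    using assms by (simp add: ReOp_op_scale_selfadjoint norm_on_BH_op_scale)
qed

theorem corollary2p7:
  fixes N :: "('h::complex_hilbert \<Rightarrow> 'h) \<Rightarrow> real"
    and T :: "'h \<Rightarrow> 'h"
  assumes "algebra_norm N"
    and "self_adjoint_norm N"
    and "weakly_unitarily_invariant N"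
    and "T \<in> BH"
    and "onorm T \<le> 1"
  shows "gen_num_radius N (\<lambda>x. T (adj T x) - adj T (T x))
           \<le> ereal (4 * N T) * (SUP U\<in>unitaries. ereal (N U))"
proof -
  have N: "is_norm_on_BH N" using assms(1) by (simp add: algebra_norm_def)
  have "gen_num_radius N (\<lambda>x. T (adj T x) - adj T (T x)) \<le> ereal (N (\<lambda>x. T (adj T x) - adj T (T x)))"
    using N self_commutator_in_BH[OF assms(4)] self_commutator_selfadjoint[OF assms(4)]
    by (rule gen_num_radius_selfadjoint_le)
  also have "\<dots> \<le> ereal (2 * N T) * ereal (N T)"
    using norm_self_commutator_le[OF assms(1,2,4)] by simp
  also have "\<dots> \<le> ereal (2 * N T) * (2 * (SUP U\<in>unitaries. ereal (N U)))"
    using norm_contraction_le_SUP_unitaries[OF N assms(4,5)] norm_on_BH_nonneg[OF N assms(4)]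
    by (intro ereal_mult_left_mono) simp_all
  also have "\<dots> = ereal (4 * N T) * (SUP U\<in>unitaries. ereal (N U))"
    by (simp add: mult.assoc[symmetric])
  finally show ?thesis .
qed

end
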